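(* Let $M\ge 3$ be an integer, let $c>0$, $f_c>0$, $d>0$, $R_D>0$ and $\theta_D\in(-\pi/2,\pi/2)$. Take all frequency offsets zero, i.e. $\Delta f_m=0$ for all $m$, so that $\xi_m=-\frac{d^2 f_c}{2R_D^2}(m-1)^2$ for $m=1,\dots,M$, and define $$X=\frac{4\pi^2}{c^2}\sum_{m=1}^M\sum_{n=1}^M(\xi_m-\xi_n)^2,\qquad Y=\frac{4\pi^2 d f_c\cos\theta_D}{c^2}\sum_{m=1}^M\sum_{n=1}^M (\xi_m-\xi_n)(m-n),\qquad Z=\frac{4\pi^2 f_c^2 d^2\cos^2\theta_D}{c^2}\sum_{m=1}^M\sum_{n=1}^M (m-n)^2 .$$ Let $E=\{(R,\theta)\in\mathbb{R}^2: X(R-R_D)^2+2Y(R-R_D)(\theta-\theta_D)+Z(\theta-\theta_D)^2=M^2\}$. Then $XZ>Y^2$, $E$ is an ellipse centred at $(R_D,\theta_D)$, and the area $S$ it encloses, the range extent $\Delta_R=\max_E R-\min_E R$ and the angular extent $\Delta_\theta=\max_E\theta-\min_E\theta$ are $$S=\frac{3\sqrt{15}\,c^2R_D^2}{\pi f_c^2 d^3\cos\theta_D\,(M^2-1)\sqrt{M^2-4}},\qquad \Delta_R=\frac{6\sqrt{10}\,cR_D^2}{\pi f_c d^2\sqrt{(M^2-1)(M^2-4)}},$$ $$\Delta_\theta=\frac{c\sqrt{6(16M^2-30M+11)}}{\pi f_c d\cos\theta_D\sqrt{(M^2-1)(M^2-4)}} .$$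
   Context: Physical setting: a conventional phased uniform linear array ($M$ antennas, spacing $d$, carrier $f_c$, no frequency offsets) focusing on a target at range $R_D$, angle $\theta_D$; $E$ models the half-power boundary of the beampattern in the (range, angle) plane, with $S$ its area and $\Delta_R$, $\Delta_\theta$ the main-lobe beamwidths in range and angle. *)

theory Defs
  imports "HOL-Analysis.Analysis"
begin

definition is_ellipse_centred :: "(real \<times> real) set \<Rightarrow> real \<times> real \<Rightarrow> bool" where
  "is_ellipse_centred E c \<longleftrightarrow>
     (\<exists>a b phi. a > 0 \<and> b > 0 \<and>
        E = {(fst c + a * cos t * cos phi - b * sin t * sin phi,
              snd c + a * cos t * sin phi + b * sin t * cos phi) | t. True})"

definition xi :: "real \<Rightarrow> real \<Rightarrow> real \<Rightarrow> nat \<Rightarrow> real" where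
  "xi d fc RD m = - (d^2 * fc / (2 * RD^2)) * (real m - 1)^2"

definition Xc :: "nat \<Rightarrow> real \<Rightarrow> real \<Rightarrow> real \<Rightarrow> real \<Rightarrow> real" where
  "Xc M c fc d RD = 4 * pi^2 / c^2 *
      (\<Sum>m\<in>{1..M}. \<Sum>n\<in>{1..M}. (xi d fc RD m - xi d fc RD n)^2)"

definition Yc :: "nat \<Rightarrow> real \<Rightarrow> real \<Rightarrow> real \<Rightarrow> real \<Rightarrow> real \<Rightarrow> real" where
  "Yc M c fc d RD thD = 4 * pi^2 * d * fc * cos thD / c^2 *
      (\<Sum>m\<in>{1..M}. \<Sum>n\<in>{1..M}. (xi d fc RD m - xi d fc RD n) * (real m - real n))"

definition Zc :: "nat \<Rightarrow> real \<Rightarrow> real \<Rightarrow> real \<Rightarrow> real \<Rightarrow> real" where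
  "Zc M c fc d thD = 4 * pi^2 * fc^2 * d^2 * (cos thD)^2 / c^2 *
      (\<Sum>m\<in>{1..M}. \<Sum>n\<in>{1..M}. (real m - real n)^2)"

end

theory Submission
  imports Defs
begin

(* With xi_m = -k (m-1)^2, the identity
     sum_m sum_n (f m - f n) (g m - g n) = 2 M sum f g - 2 (sum f) (sum g)
   turns X, Y, Z into power sums over 0, ..., M-1; this gives them in closed form and
     XZ - Y^2 = pi^4 d^6 f_c^4 cos^2 theta_D M^4 (M^2-1)^2 (M^2-4) / (135 c^4 R_D^4),
   which is positive for M >= 3.
   The geometric claims hold for any positive definite form q(u,v) = A u^2 + 2 B u v + C v^2.
   Rotating by an angle that kills the cross term turns q = r^2 into an axis-aligned ellipse.
   Completing the square, C q = (C v + B u)^2 + (AC - B^2) u^2, shows that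
   |u| <= r sqrt (C / (AC - B^2)) on the level set, with equality attained, and that each slice
   u = const of q <= r^2 is an interval of length 2 sqrt (C r^2 - (AC - B^2) u^2) / C;
   integrating these lengths gives the area pi r^2 / sqrt (AC - B^2). *)

lemma quadratic_form_completing_square:
  fixes A B C u v :: real
  shows "C * (A * u^2 + 2 * B * u * v + C * v^2) = (C * v + B * u)^2 + (A * C - B^2) * u^2"
  by (simp add: power2_eq_square algebra_simps)

lemma pos_def_quadratic_form_coeff_pos:
  fixes A B C :: real
  assumes "A > 0" and "A * C - B^2 > 0"
  shows "C > 0"
  using assms by (smt (verit) mult_nonneg_nonpos zero_le_power2)

lemma pos_def_quadratic_form_pos:
  fixes A B C x y :: real
  assumes A: "A > 0" and D: "A * C - B^2 > 0" and nz: "(x, y) \<noteq> (0, 0)"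
  shows "A * x^2 + 2 * B * x * y + C * y^2 > 0"
proof -
  have "A * (A * x^2 + 2 * B * x * y + C * y^2) = (A * x + B * y)^2 + (A * C - B^2) * y^2"
    using quadratic_form_completing_square[where A = C and B = B and C = A and u = y and v = x]
    by (simp add: algebra_simps)
  also have "\<dots> > 0"
    using nz D by (cases "y = 0") (auto intro: add_nonneg_pos)
  finally show ?thesis using A by (simp add: zero_less_mult_iff)
qed

lemma diagonalising_angle_exists:
  fixes A B C :: real
  obtains phi where "(C - A) * cos phi * sin phi + B * (cos phi^2 - sin phi^2) = 0"
proof -
  let ?f = "\<lambda>phi. (C - A) * cos phi * sin phi + B * (cos phi^2 - sin phi^2)"
  have cont: "\<forall>x. 0 \<le> x \<and> x \<le> pi/2 \<longrightarrow> isCont ?f x"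
    by (intro allI impI continuous_intros)
  have "?f 0 = B" "?f (pi/2) = - B" by simp_all
  then have "\<exists>x\<ge>0. x \<le> pi/2 \<and> ?f x = 0"
    using IVT[of ?f 0 0 "pi/2"] IVT2[of ?f "pi/2" 0 0] cont by (cases "B \<ge> 0") auto
  then show ?thesis using that by blast
qed

lemma quadratic_form_rotate:
  fixes A B C P R phi :: real
  assumes "(C - A) * cos phi * sin phi + B * (cos phi^2 - sin phi^2) = 0"
  defines "x \<equiv> P * cos phi - R * sin phi" and "y \<equiv> P * sin phi + R * cos phi"
  shows "A * x^2 + 2 * B * x * y + C * y^2
       = (A * cos phi^2 + 2 * B * cos phi * sin phi + C * sin phi^2) * P^2
       + (A * sin phi^2 - 2 * B * sin phi * cos phi + C * cos phi^2) * R^2"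
proof -
  have "A * x^2 + 2 * B * x * y + C * y^2
       = (A * cos phi^2 + 2 * B * cos phi * sin phi + C * sin phi^2) * P^2
       + (A * sin phi^2 - 2 * B * sin phi * cos phi + C * cos phi^2) * R^2
       + 2 * P * R * ((C - A) * cos phi * sin phi + B * (cos phi^2 - sin phi^2))"
    unfolding x_def y_def by (simp add: power2_eq_square algebra_simps)
  then show ?thesis using assms(1) by simp
qed

lemma axis_ellipse_eq_range:
  fixes l1 l2 r :: real
  assumes "l1 > 0" and "l2 > 0" and "r > 0"
  shows "{(P, R). l1 * P^2 + l2 * R^2 = r^2}
       = range (\<lambda>t. (r / sqrt l1 * cos t, r / sqrt l2 * sin t))"
proof (intro set_eqI iffI)
  fix p assume "p \<in> {(P, R). l1 * P^2 + l2 * R^2 = r^2}"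
  then obtain P R where p: "p = (P, R)" and PR: "l1 * P^2 + l2 * R^2 = r^2" by auto
  have "(sqrt l1 * P / r)^2 + (sqrt l2 * R / r)^2 = 1"
    using PR assms by (simp add: power_divide power_mult_distrib add_divide_distrib[symmetric])
  then obtain t where "sqrt l1 * P / r = cos t" "sqrt l2 * R / r = sin t"
    by (rule sincos_total_2pi)
  then have "P = r / sqrt l1 * cos t" "R = r / sqrt l2 * sin t"
    using assms by (simp_all add: field_simps)
  then show "p \<in> range (\<lambda>t. (r / sqrt l1 * cos t, r / sqrt l2 * sin t))" using p by auto
next
  fix p assume "p \<in> range (\<lambda>t. (r / sqrt l1 * cos t, r / sqrt l2 * sin t))"
  then obtain t where p: "p = (r / sqrt l1 * cos t, r / sqrt l2 * sin t)" by auto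
  have "l1 * (r / sqrt l1 * cos t)^2 + l2 * (r / sqrt l2 * sin t)^2 = r^2 * cos t^2 + r^2 * sin t^2"
    using assms by (simp add: power_divide power_mult_distrib)
  also have "\<dots> = r^2" by (simp flip: distrib_left)
  finally show "p \<in> {(P, R). l1 * P^2 + l2 * R^2 = r^2}" using p by simp
qed

lemma quadratic_level_set_is_ellipse:
  fixes A B C r xc yc :: real
  assumes A: "A > 0" and D: "A * C - B^2 > 0" and r: "r > 0"
  shows "is_ellipse_centred
           {(x, y). A * (x - xc)^2 + 2 * B * (x - xc) * (y - yc) + C * (y - yc)^2 = r^2} (xc, yc)"
proof -
  obtain phi where phi: "(C - A) * cos phi * sin phi + B * (cos phi^2 - sin phi^2) = 0"
    by (rule diagonalising_angle_exists)
  define l1 where "l1 = A * cos phi^2 + 2 * B * cos phi * sin phi + C * sin phi^2"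
  define l2 where "l2 = A * sin phi^2 - 2 * B * sin phi * cos phi + C * cos phi^2"
  have "(cos phi, sin phi) \<noteq> (0, 0)" "(- sin phi, cos phi) \<noteq> (0, 0)"
    using sin_cos_squared_add[of phi] by (auto simp del: sin_cos_squared_add)
  from this[THEN pos_def_quadratic_form_pos[OF A D]] have l1: "l1 > 0" and l2: "l2 > 0"
    unfolding l1_def l2_def by (simp_all add: algebra_simps)
  define rot where "rot = (\<lambda>(P, R). (xc + P * cos phi - R * sin phi, yc + P * sin phi + R * cos phi))"
  have "{(x, y). A * (x - xc)^2 + 2 * B * (x - xc) * (y - yc) + C * (y - yc)^2 = r^2}
      = rot ` {(P, R). l1 * P^2 + l2 * R^2 = r^2}"
  proof (intro set_eqI iffI)
    fix p assume p: "p \<in> {(x, y). A * (x - xc)^2 + 2 * B * (x - xc) * (y - yc) + C * (y - yc)^2 = r^2}"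
    obtain x y where xy: "p = (x, y)" by fastforce
    define P where "P = cos phi * (x - xc) + sin phi * (y - yc)"
    define R where "R = - sin phi * (x - xc) + cos phi * (y - yc)"
    have dx: "x - xc = P * cos phi - R * sin phi" and dy: "y - yc = P * sin phi + R * cos phi"
      unfolding P_def R_def using sin_cos_squared_add[of phi]
      by (simp_all add: power2_eq_square algebra_simps) (simp_all add: distrib_left[symmetric])
    from p have "A * (x - xc)^2 + 2 * B * (x - xc) * (y - yc) + C * (y - yc)^2 = r^2"
      by (simp add: xy)
    then have "l1 * P^2 + l2 * R^2 = r^2"
      unfolding dx dy quadratic_form_rotate[OF phi] l1_def l2_def by (simp add: mult.commute)
    moreover have "rot (P, R) = p" using dx dy unfolding rot_def xy by (simp add: algebra_simps)
    ultimately show "p \<in> rot ` {(P, R). l1 * P^2 + l2 * R^2 = r^2}" by force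
  next
    fix p assume "p \<in> rot ` {(P, R). l1 * P^2 + l2 * R^2 = r^2}"
    then obtain P R where "p = rot (P, R)" "l1 * P^2 + l2 * R^2 = r^2" by auto
    then show "p \<in> {(x, y). A * (x - xc)^2 + 2 * B * (x - xc) * (y - yc) + C * (y - yc)^2 = r^2}"
      using quadratic_form_rotate[OF phi, of P R] unfolding rot_def l1_def l2_def
      by (simp add: algebra_simps)
  qed
  also have "\<dots> = rot ` range (\<lambda>t. (r / sqrt l1 * cos t, r / sqrt l2 * sin t))"
    using axis_ellipse_eq_range[OF l1 l2 r] by simp
  also have "\<dots> = {(xc + r / sqrt l1 * cos t * cos phi - r / sqrt l2 * sin t * sin phi,
                      yc + r / sqrt l1 * cos t * sin phi + r / sqrt l2 * sin t * cos phi) | t. True}"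
    by (simp add: rot_def image_image full_SetCompr_eq)
  finally show ?thesis
    unfolding is_ellipse_centred_def using l1 l2 r
    by (intro exI[of _ "r / sqrt l1"] exI[of _ "r / sqrt l2"] exI[of _ phi]) simp
qed

lemma quadratic_level_set_fst_extent:
  fixes A B C r xc yc :: real
  assumes A: "A > 0" and D: "A * C - B^2 > 0" and r: "r > 0"
  defines "E \<equiv> {(x, y). A * (x - xc)^2 + 2 * B * (x - xc) * (y - yc) + C * (y - yc)^2 = r^2}"
  shows "\<exists>xmax xmin. xmax \<in> fst ` E \<and> xmin \<in> fst ` E
          \<and> (\<forall>x\<in>fst ` E. xmin \<le> x \<and> x \<le> xmax)
          \<and> xmax - xmin = 2 * r * sqrt (C / (A * C - B^2))"
proof -
  have C: "C > 0" using pos_def_quadratic_form_coeff_pos[OF A D] .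
  define w where "w = r * sqrt (C / (A * C - B^2))"
  have w: "w > 0" and w2: "(A * C - B^2) * w^2 = C * r^2"
    unfolding w_def using r C D by (simp_all add: power_mult_distrib)
  have on_E: "(xc + e, yc - B * e / C) \<in> E" if "e^2 = w^2" for e
  proof -
    have "C * (A * e^2 + 2 * B * e * (- B * e / C) + C * (- B * e / C)^2) = C * r^2"
      using quadratic_form_completing_square[where A = A and B = B and C = C and u = e and v = "- B * e / C"]
        that w2 C
      by simp
    then show ?thesis unfolding E_def using C by simp
  qed
  have bound: "\<bar>x - xc\<bar> \<le> w" if x: "x \<in> fst ` E" for x
  proof -
    obtain y where "A * (x - xc)^2 + 2 * B * (x - xc) * (y - yc) + C * (y - yc)^2 = r^2"
      using x unfolding E_def by force
    then have "(A * C - B^2) * (x - xc)^2 \<le> (A * C - B^2) * w^2"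
      using quadratic_form_completing_square[where A = A and B = B and C = C and u = "x - xc" and v = "y - yc"]
        w2
      by (smt (verit) zero_le_power2)
    then have "(x - xc)^2 \<le> w^2" using D by simp
    then show ?thesis using w by (simp add: power2_le_iff_abs_le)
  qed
  show ?thesis
  proof (intro exI conjI ballI)
    show "xc + w \<in> fst ` E" "xc - w \<in> fst ` E"
      using on_E[of w] on_E[of "- w"] by force+
    show "xc - w \<le> x" "x \<le> xc + w" if "x \<in> fst ` E" for x
      using bound[OF that] by auto
    show "xc + w - (xc - w) = 2 * r * sqrt (C / (A * C - B^2))" by (simp add: w_def)
  qed
qed

lemma quadratic_level_set_snd_extent:
  fixes A B C r xc yc :: real
  assumes A: "A > 0" and D: "A * C - B^2 > 0" and r: "r > 0"
  defines "E \<equiv> {(x, y). A * (x - xc)^2 + 2 * B * (x - xc) * (y - yc) + C * (y - yc)^2 = r^2}"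
  shows "\<exists>ymax ymin. ymax \<in> snd ` E \<and> ymin \<in> snd ` E
          \<and> (\<forall>y\<in>snd ` E. ymin \<le> y \<and> y \<le> ymax)
          \<and> ymax - ymin = 2 * r * sqrt (A / (A * C - B^2))"
proof -
  have "E = {(x, y). C * (y - yc)^2 + 2 * B * (y - yc) * (x - xc) + A * (x - xc)^2 = r^2}"
    unfolding E_def by (simp add: algebra_simps)
  then have "snd ` E
      = fst ` {(y, x). C * (y - yc)^2 + 2 * B * (y - yc) * (x - xc) + A * (x - xc)^2 = r^2}"
    by force
  moreover have "C > 0" "C * A - B^2 > 0"
    using pos_def_quadratic_form_coeff_pos[OF A D] D by (simp_all add: mult.commute)
  ultimately show ?thesis
    using quadratic_level_set_fst_extent[of C A B r yc xc] r by (simp add: mult.commute)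
qed

lemma emeasure_quadratic_sublevel_section:
  fixes A B C r u yc :: real
  assumes C: "C > 0" and D: "A * C - B^2 > 0"
  shows "emeasure lborel {y. C * (y - yc)^2 + 2 * B * u * (y - yc) + A * u^2 \<le> r^2}
       = ennreal (2 * sqrt (max 0 (C * r^2 - (A * C - B^2) * u^2)) / C)"
proof -
  define K where "K = C * r^2 - (A * C - B^2) * u^2"
  define m where "m = yc - B * u / C"
  have sq: "C * (y - yc)^2 + 2 * B * u * (y - yc) + A * u^2 \<le> r^2 \<longleftrightarrow> (C * (y - m))^2 \<le> K" for y
  proof -
    have "C * (y - m) = C * (y - yc) + B * u" unfolding m_def using C by (simp add: field_simps)
    then show ?thesis
      using quadratic_form_completing_square[where A = A and B = B and C = C and u = u and v = "y - yc"]
        C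
      unfolding K_def by (smt (verit) mult_le_cancel_left_pos)
  qed
  show ?thesis
  proof (cases "K \<ge> 0")
    case True
    have "(C * (y - m))^2 \<le> K \<longleftrightarrow> y \<in> {m - sqrt K / C .. m + sqrt K / C}" for y
    proof -
      have "(C * (y - m))^2 \<le> K \<longleftrightarrow> C * \<bar>y - m\<bar> \<le> sqrt K"
        using True C by (metis abs_mult abs_of_pos real_le_rsqrt real_sqrt_abs real_sqrt_le_iff)
      also have "\<dots> \<longleftrightarrow> \<bar>y - m\<bar> \<le> sqrt K / C" using C by (simp add: field_simps)
      finally show ?thesis by auto
    qed
    then have "{y. C * (y - yc)^2 + 2 * B * u * (y - yc) + A * u^2 \<le> r^2}
        = {m - sqrt K / C .. m + sqrt K / C}"
      using sq by blast
    then show ?thesis using True C unfolding K_def by simp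
  next
    case False
    then have "{y. C * (y - yc)^2 + 2 * B * u * (y - yc) + A * u^2 \<le> r^2} = {}"
      using sq by (auto intro: order_trans[OF zero_le_power2])
    then show ?thesis using False unfolding K_def by simp
  qed
qed

lemma Beta_one_half_three_halves: "Beta (1/2) (3/2) = pi / 2"
proof -
  have "(1/2 :: real) \<notin> \<int>\<^sub>\<le>\<^sub>0" by (auto dest: nonpos_Ints_nonpos)
  then have "Gamma (1/2 + 1 :: real) = 1/2 * Gamma (1/2)" by (rule Gamma_plus1)
  then have Gamma_three_halves: "Gamma (3/2 :: real) = sqrt pi / 2"
    by (simp add: Gamma_one_half_real)
  have "Gamma (2 :: real) = 1" using Gamma_fact[of 1] by simp
  moreover have "(1/2 :: real) + 3/2 = 2" by simp
  ultimately have "Beta (1/2) (3/2) = sqrt pi * (sqrt pi / 2)"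
    unfolding Beta_def Gamma_three_halves Gamma_one_half_real by simp
  then show ?thesis by simp
qed

lemma nn_integral_semicircle:
  "(\<integral>\<^sup>+s. ennreal (sqrt (max 0 (1 - s^2))) \<partial>lborel) = ennreal (pi / 2)"
proof -
  have "sqrt (max 0 (1 - s^2)) = indicator {-1..1} s * sqrt (1 - s^2) ^ 1" for s :: real
    by (auto simp: indicator_def abs_square_le_1 abs_le_iff abs_square_less_1 max_def)
  then show ?thesis
    using emeasure_cball_aux_integral[of 1] Beta_one_half_three_halves by simp
qed

lemma measure_quadratic_sublevel_set:
  fixes A B C r xc yc :: real
  assumes A: "A > 0" and D: "A * C - B^2 > 0" and r: "r > 0"
  shows "measure lebesgue {(x, y). A * (x - xc)^2 + 2 * B * (x - xc) * (y - yc) + C * (y - yc)^2 \<le> r^2}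
         = pi * r^2 / sqrt (A * C - B^2)"
proof -
  have C: "C > 0" using pos_def_quadratic_form_coeff_pos[OF A D] .
  define S where "S = {(x, y). A * (x - xc)^2 + 2 * B * (x - xc) * (y - yc) + C * (y - yc)^2 \<le> r^2}"
  define G where "G x = ennreal (2 * sqrt (max 0 (C * r^2 - (A * C - B^2) * (x - xc)^2)) / C)" for x
  have "closed S"
    unfolding S_def case_prod_unfold by (intro closed_Collect_le continuous_intros)
  then have S_borel: "S \<in> sets borel" by (rule borel_closed)
  then have S_prod: "S \<in> sets (lborel \<Otimes>\<^sub>M lborel)" unfolding lborel_prod by simp
  have slice: "emeasure lborel (Pair x -` S) = G x" for x
  proof -
    have "Pair x -` S = {y. C * (y - yc)^2 + 2 * B * (x - xc) * (y - yc) + A * (x - xc)^2 \<le> r^2}"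
      unfolding S_def by (auto simp: algebra_simps)
    then show ?thesis
      unfolding G_def using emeasure_quadratic_sublevel_section[OF C D] by simp
  qed
  define w where "w = r * sqrt (C / (A * C - B^2))"
  have w: "w > 0" and w2: "(A * C - B^2) * w^2 = C * r^2"
    unfolding w_def using r C D by (simp_all add: power_mult_distrib)
  have G_scaled: "G (xc + w * s) = ennreal (2 * r * sqrt C / C) * ennreal (sqrt (max 0 (1 - s^2)))"
    for s
  proof -
    have "C * r^2 - (A * C - B^2) * (w * s)^2 = C * r^2 * (1 - s^2)"
      using w2 by (simp add: power_mult_distrib algebra_simps)
    moreover have "max 0 (C * r^2 * (1 - s^2)) = (sqrt C * r)^2 * max 0 (1 - s^2)"
      using C r by (auto simp: max_def power_mult_distrib zero_le_mult_iff mult_le_0_iff)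
    then have "sqrt (max 0 (C * r^2 * (1 - s^2))) = sqrt C * r * sqrt (max 0 (1 - s^2))"
      using C r by (simp add: real_sqrt_mult)
    ultimately have "G (xc + w * s) = ennreal (2 * r * sqrt C / C * sqrt (max 0 (1 - s^2)))"
      unfolding G_def by (simp add: mult_ac)
    then show ?thesis using C r by (subst ennreal_mult[symmetric]) auto
  qed
  have "emeasure lebesgue S = emeasure (lborel \<Otimes>\<^sub>M lborel) S"
    using S_borel by (simp add: lborel_prod)
  also have "\<dots> = (\<integral>\<^sup>+x. G x \<partial>lborel)"
    using lborel.emeasure_pair_measure_alt[OF S_prod] slice by simp
  also have "\<dots> = ennreal w * (\<integral>\<^sup>+s. G (xc + w * s) \<partial>lborel)"
    using nn_integral_real_affine[of G w xc] w unfolding G_def by simp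
  also have "\<dots> = ennreal w * (ennreal (2 * r * sqrt C / C) * ennreal (pi / 2))"
    unfolding G_scaled by (simp add: nn_integral_cmult nn_integral_semicircle)
  also have "\<dots> = ennreal (w * (2 * r * sqrt C / C) * (pi / 2))"
    using w r C by (simp add: ennreal_mult[symmetric] mult.assoc del: ennreal_mult')
  also have "w * (2 * r * sqrt C / C) * (pi / 2) = pi * r^2 / sqrt (A * C - B^2)"
    unfolding w_def using C D by (simp add: real_sqrt_divide power2_eq_square field_simps)
  finally show ?thesis
    unfolding S_def[symmetric] measure_def using D r by simp
qed

lemma sum_sum_diff_mult_diff:
  fixes f g :: "'a \<Rightarrow> real"
  shows "(\<Sum>m\<in>I. \<Sum>n\<in>I. (f m - f n) * (g m - g n))
       = 2 * real (card I) * (\<Sum>m\<in>I. f m * g m) - 2 * (\<Sum>m\<in>I. f m) * (\<Sum>m\<in>I. g m)"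
proof -
  have diag: "(\<Sum>m\<in>I. \<Sum>n\<in>I. f m * g m) = real (card I) * (\<Sum>m\<in>I. f m * g m)"
    "(\<Sum>m\<in>I. \<Sum>n\<in>I. f n * g n) = real (card I) * (\<Sum>m\<in>I. f m * g m)"
    by (simp_all add: sum_distrib_left)
  have cross: "(\<Sum>m\<in>I. \<Sum>n\<in>I. f m * g n) = (\<Sum>m\<in>I. f m) * (\<Sum>m\<in>I. g m)"
    "(\<Sum>m\<in>I. \<Sum>n\<in>I. f n * g m) = (\<Sum>m\<in>I. f m) * (\<Sum>m\<in>I. g m)"
    by (simp_all add: sum_product sum.swap[of "\<lambda>m n. f n * g m"])
  have "(\<Sum>m\<in>I. \<Sum>n\<in>I. (f m - f n) * (g m - g n))
      = (\<Sum>m\<in>I. \<Sum>n\<in>I. f m * g m) + (\<Sum>m\<in>I. \<Sum>n\<in>I. f n * g n)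
        - (\<Sum>m\<in>I. \<Sum>n\<in>I. f m * g n) - (\<Sum>m\<in>I. \<Sum>n\<in>I. f n * g m)"
    by (simp add: algebra_simps sum.distrib sum_subtractf)
  then show ?thesis unfolding diag cross by simp
qed

lemma sum_sum_sq_diff:
  fixes f :: "'a \<Rightarrow> real"
  shows "(\<Sum>m\<in>I. \<Sum>n\<in>I. (f m - f n)^2)
       = 2 * real (card I) * (\<Sum>m\<in>I. f m ^ 2) - 2 * (\<Sum>m\<in>I. f m)^2"
  using sum_sum_diff_mult_diff[of f f I] by (simp add: power2_eq_square)

lemma sum_shifted_power1: "(\<Sum>m\<in>{1..M}. real m - 1) = real M * (real M - 1) / 2"
  by (induction M) (simp_all add: field_simps)

lemma sum_shifted_power2:
  "(\<Sum>m\<in>{1..M}. (real m - 1)^2) = (real M - 1) * real M * (2 * real M - 1) / 6"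
  by (induction M) (simp_all add: field_simps power2_eq_square)

lemma sum_shifted_power3: "(\<Sum>m\<in>{1..M}. (real m - 1)^3) = (real M * (real M - 1) / 2)^2"
  by (induction M) (simp_all add: field_simps power2_eq_square power3_eq_cube)

lemma sum_shifted_power4: "(\<Sum>m\<in>{1..M}. (real m - 1)^4)
    = (real M - 1) * real M * (2 * real M - 1) * (3 * (real M)^2 - 3 * real M - 1) / 30"
  by (induction M) (simp_all add: field_simps power2_eq_square power4_eq_xxxx)

lemma Xc_closed_form:
  assumes "c \<noteq> 0" and "RD \<noteq> 0"
  shows "Xc M c fc d RD = pi^2 * d^4 * fc^2 * (real M)^2 * ((real M)^2 - 1)
     * (16 * (real M)^2 - 30 * real M + 11) / (90 * c^2 * RD^4)"
proof -
  define k where "k = d^2 * fc / (2 * RD^2)"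
  have "(\<Sum>m\<in>{1..M}. \<Sum>n\<in>{1..M}. (xi d fc RD m - xi d fc RD n)^2)
      = k^2 * (\<Sum>m\<in>{1..M}. \<Sum>n\<in>{1..M}. ((real m - 1)^2 - (real n - 1)^2)^2)"
    unfolding sum_distrib_left xi_def k_def[symmetric] by (simp add: power2_eq_square algebra_simps)
  also have "\<dots> = k^2 * (2 * real M * (\<Sum>m\<in>{1..M}. (real m - 1)^4)
                         - 2 * (\<Sum>m\<in>{1..M}. (real m - 1)^2)^2)"
    unfolding sum_sum_sq_diff by (simp flip: power_mult)
  also have "\<dots> = k^2 * ((real M)^2 * ((real M)^2 - 1) * (16 * (real M)^2 - 30 * real M + 11) / 90)"
    unfolding sum_shifted_power4 sum_shifted_power2 by (simp add: power2_eq_square field_simps)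
  finally have double_sum: "(\<Sum>m\<in>{1..M}. \<Sum>n\<in>{1..M}. (xi d fc RD m - xi d fc RD n)^2)
      = k^2 * ((real M)^2 * ((real M)^2 - 1) * (16 * (real M)^2 - 30 * real M + 11) / 90)" .
  show ?thesis
    unfolding Xc_def double_sum k_def using assms by (simp add: field_simps power2_eq_square power4_eq_xxxx)
qed

lemma Yc_closed_form:
  assumes "c \<noteq> 0" and "RD \<noteq> 0"
  shows "Yc M c fc d RD thD
       = - (pi^2 * d^3 * fc^2 * cos thD * (real M)^2 * (real M - 1)^2 * (real M + 1) / (3 * c^2 * RD^2))"
proof -
  define k where "k = d^2 * fc / (2 * RD^2)"
  have "(\<Sum>m\<in>{1..M}. \<Sum>n\<in>{1..M}. (xi d fc RD m - xi d fc RD n) * (real m - real n))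
      = - k * (\<Sum>m\<in>{1..M}. \<Sum>n\<in>{1..M}.
                 ((real m - 1)^2 - (real n - 1)^2) * ((real m - 1) - (real n - 1)))"
    unfolding sum_distrib_left xi_def k_def[symmetric] by (simp add: algebra_simps)
  also have "\<dots> = - k * (2 * real M * (\<Sum>m\<in>{1..M}. (real m - 1)^3)
                         - 2 * (\<Sum>m\<in>{1..M}. (real m - 1)^2) * (\<Sum>m\<in>{1..M}. real m - 1))"
    unfolding sum_sum_diff_mult_diff by (simp add: power2_eq_square power3_eq_cube)
  also have "\<dots> = - k * ((real M)^2 * (real M - 1)^2 * (real M + 1) / 6)"
    unfolding sum_shifted_power3 sum_shifted_power2 sum_shifted_power1
    by (simp add: power2_eq_square field_simps)
  finally have double_sum:
    "(\<Sum>m\<in>{1..M}. \<Sum>n\<in>{1..M}. (xi d fc RD m - xi d fc RD n) * (real m - real n))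
      = - k * ((real M)^2 * (real M - 1)^2 * (real M + 1) / 6)" .
  show ?thesis
    unfolding Yc_def double_sum k_def using assms by (simp add: field_simps power2_eq_square power3_eq_cube)
qed

lemma Zc_closed_form:
  assumes "c \<noteq> 0"
  shows "Zc M c fc d thD
       = 2 * pi^2 * fc^2 * d^2 * (cos thD)^2 * (real M)^2 * ((real M)^2 - 1) / (3 * c^2)"
proof -
  have "(\<Sum>m\<in>{1..M}. \<Sum>n\<in>{1..M}. (real m - real n)^2)
      = (\<Sum>m\<in>{1..M}. \<Sum>n\<in>{1..M}. ((real m - 1) - (real n - 1))^2)"
    by simp
  also have "\<dots> = 2 * real M * (\<Sum>m\<in>{1..M}. (real m - 1)^2) - 2 * (\<Sum>m\<in>{1..M}. real m - 1)^2"
    unfolding sum_sum_sq_diff by simp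
  also have "\<dots> = (real M)^2 * ((real M)^2 - 1) / 6"
    unfolding sum_shifted_power2 sum_shifted_power1 by (simp add: power2_eq_square field_simps)
  finally have double_sum: "(\<Sum>m\<in>{1..M}. \<Sum>n\<in>{1..M}. (real m - real n)^2)
      = (real M)^2 * ((real M)^2 - 1) / 6" .
  show ?thesis unfolding Zc_def double_sum using assms by (simp add: field_simps)
qed

lemma beampattern_discriminant:
  assumes "c \<noteq> 0" and "RD \<noteq> 0"
  shows "Xc M c fc d RD * Zc M c fc d thD - (Yc M c fc d RD thD)^2
       = pi^4 * d^6 * fc^4 * (cos thD)^2 * (real M)^4 * ((real M)^2 - 1)^2 * ((real M)^2 - 4)
         / (135 * c^4 * RD^4)"
  unfolding Xc_closed_form[OF assms] Yc_closed_form[OF assms] Zc_closed_form[OF assms(1)]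
  using assms
  by (simp add: field_simps power2_eq_square power3_eq_cube power4_eq_xxxx eval_nat_numeral)

lemma beampattern_discriminant_pos:
  assumes "M \<ge> 3" and "c \<noteq> 0" and "fc \<noteq> 0" and "d \<noteq> 0" and "RD \<noteq> 0" and "cos thD \<noteq> 0"
  shows "Xc M c fc d RD * Zc M c fc d thD - (Yc M c fc d RD thD)^2 > 0"
proof -
  have "(real M)^2 \<ge> 3^2" using assms(1) by (intro power_mono) auto
  then show ?thesis
    unfolding beampattern_discriminant[OF assms(2,5)] using assms by simp
qed

lemma Xc_pos:
  assumes "M \<ge> 2" and "c \<noteq> 0" and "fc \<noteq> 0" and "d \<noteq> 0" and "RD \<noteq> 0"
  shows "Xc M c fc d RD > 0"
proof -
  have M2: "(real M)^2 \<ge> 2^2" using assms(1) by (intro power_mono) auto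
  have "real M * (16 * real M - 30) \<ge> 0" using assms(1) by simp
  then have "16 * (real M)^2 - 30 * real M + 11 > 0"
    by (simp add: power2_eq_square right_diff_distrib)
  then show ?thesis
    unfolding Xc_closed_form[OF assms(2,5)] using M2 assms
    by (intro divide_pos_pos mult_pos_pos) (simp_all add: zero_less_power_eq)
qed

context
  fixes M :: nat and c fc d RD thD :: real
  assumes M: "M \<ge> 3" and c: "c > 0" and fc: "fc > 0" and d: "d > 0" and RD: "RD > 0"
    and cos_thD: "cos thD > 0"
begin

lemma beampattern_area:
  "pi * (real M)^2 / sqrt (Xc M c fc d RD * Zc M c fc d thD - (Yc M c fc d RD thD)^2)
     = 3 * sqrt 15 * c^2 * RD^2 / (pi * fc^2 * d^3 * cos thD * ((real M)^2 - 1) * sqrt ((real M)^2 - 4))"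
proof -
  define a where "a = (real M)^2 - 1"
  define b where "b = (real M)^2 - 4"
  have "(real M)^2 \<ge> 3^2" using M by (intro power_mono) auto
  then have a: "a > 0" and b: "b > 0" unfolding a_def b_def by simp_all
  have nonzero: "c \<noteq> 0" "RD \<noteq> 0" using c RD by auto
  have sqrt_disc: "sqrt (Xc M c fc d RD * Zc M c fc d thD - (Yc M c fc d RD thD)^2)
      = pi^2 * d^3 * fc^2 * cos thD * (real M)^2 * a * sqrt b / (3 * sqrt 15 * c^2 * RD^2)"
  proof (rule real_sqrt_unique)
    show "0 \<le> pi^2 * d^3 * fc^2 * cos thD * (real M)^2 * a * sqrt b / (3 * sqrt 15 * c^2 * RD^2)"
      using fc d cos_thD a b by simp
    show "(pi^2 * d^3 * fc^2 * cos thD * (real M)^2 * a * sqrt b / (3 * sqrt 15 * c^2 * RD^2))^2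
        = Xc M c fc d RD * Zc M c fc d thD - (Yc M c fc d RD thD)^2"
      unfolding beampattern_discriminant[OF nonzero] a_def[symmetric] b_def[symmetric]
        power_divide power_mult_distrib
      using nonzero b by (simp add: field_simps eval_nat_numeral)
  qed
  show ?thesis
    unfolding sqrt_disc a_def[symmetric] b_def[symmetric] using M c fc d RD cos_thD a b
    by (simp add: field_simps power2_eq_square)
qed

lemma beampattern_range_extent:
  "2 * real M * sqrt (Zc M c fc d thD / (Xc M c fc d RD * Zc M c fc d thD - (Yc M c fc d RD thD)^2))
     = 6 * sqrt 10 * c * RD^2 / (pi * fc * d^2 * sqrt (((real M)^2 - 1) * ((real M)^2 - 4)))"
proof -
  define a where "a = (real M)^2 - 1"
  define b where "b = (real M)^2 - 4"
  have "(real M)^2 \<ge> 3^2" using M by (intro power_mono) auto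
  then have a: "a > 0" and b: "b > 0" unfolding a_def b_def by simp_all
  have nonzero: "c \<noteq> 0" "RD \<noteq> 0" using c RD by auto
  have sqrt_ratio: "sqrt (Zc M c fc d thD / (Xc M c fc d RD * Zc M c fc d thD - (Yc M c fc d RD thD)^2))
      = 3 * sqrt 10 * c * RD^2 / (pi * fc * d^2 * real M * sqrt (a * b))"
  proof (rule real_sqrt_unique)
    show "0 \<le> 3 * sqrt 10 * c * RD^2 / (pi * fc * d^2 * real M * sqrt (a * b))"
      using c fc d a b by simp
    show "(3 * sqrt 10 * c * RD^2 / (pi * fc * d^2 * real M * sqrt (a * b)))^2
        = Zc M c fc d thD / (Xc M c fc d RD * Zc M c fc d thD - (Yc M c fc d RD thD)^2)"
      unfolding beampattern_discriminant[OF nonzero] unfolding Zc_closed_form[OF nonzero(1)]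
        a_def[symmetric] b_def[symmetric] power_divide power_mult_distrib
      using M c fc d RD cos_thD a b by (simp add: field_simps eval_nat_numeral)
  qed
  show ?thesis
    unfolding sqrt_ratio a_def[symmetric] b_def[symmetric] using M c fc d a b by (simp add: field_simps)
qed

lemma beampattern_angle_extent:
  "2 * real M * sqrt (Xc M c fc d RD / (Xc M c fc d RD * Zc M c fc d thD - (Yc M c fc d RD thD)^2))
     = c * sqrt (6 * (16 * (real M)^2 - 30 * real M + 11))
       / (pi * fc * d * cos thD * sqrt (((real M)^2 - 1) * ((real M)^2 - 4)))"
proof -
  define a where "a = (real M)^2 - 1"
  define b where "b = (real M)^2 - 4"
  define q where "q = 16 * (real M)^2 - 30 * real M + 11"
  have "(real M)^2 \<ge> 3^2" using M by (intro power_mono) auto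
  then have a: "a > 0" and b: "b > 0" unfolding a_def b_def by simp_all
  have "real M * (16 * real M - 30) \<ge> 0" using M by simp
  then have q: "q > 0" unfolding q_def by (simp add: power2_eq_square right_diff_distrib)
  have nonzero: "c \<noteq> 0" "RD \<noteq> 0" using c RD by auto
  have sqrt_ratio: "sqrt (Xc M c fc d RD / (Xc M c fc d RD * Zc M c fc d thD - (Yc M c fc d RD thD)^2))
      = c * sqrt (6 * q) / (2 * pi * fc * d * cos thD * real M * sqrt (a * b))"
  proof (rule real_sqrt_unique)
    show "0 \<le> c * sqrt (6 * q) / (2 * pi * fc * d * cos thD * real M * sqrt (a * b))"
      using c fc d cos_thD a b q by simp
    show "(c * sqrt (6 * q) / (2 * pi * fc * d * cos thD * real M * sqrt (a * b)))^2
        = Xc M c fc d RD / (Xc M c fc d RD * Zc M c fc d thD - (Yc M c fc d RD thD)^2)"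
      unfolding beampattern_discriminant[OF nonzero] unfolding Xc_closed_form[OF nonzero]
        a_def[symmetric] b_def[symmetric] q_def[symmetric] power_divide power_mult_distrib
      using M c fc d RD cos_thD a b q by (simp add: field_simps eval_nat_numeral)
  qed
  show ?thesis
    unfolding sqrt_ratio a_def[symmetric] b_def[symmetric] q_def[symmetric] using M c fc d cos_thD a b q
    by (simp add: field_simps)
qed

end

theorem corollary1:
  fixes M :: nat and c fc d RD thD :: real
  assumes hM: "M \<ge> 3" and hc: "c > 0" and hfc: "fc > 0" and hd: "d > 0" and hRD: "RD > 0"
    and hth1: "- (pi/2) < thD" and hth2: "thD < pi/2"
  defines "E \<equiv> {(R, th). Xc M c fc d RD * (R - RD)^2 + 2 * Yc M c fc d RD thD * (R - RD) * (th - thD) + Zc M c fc d thD * (th - thD)^2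
                        = (real M)^2}"
  shows "Xc M c fc d RD * Zc M c fc d thD > (Yc M c fc d RD thD)^2
    \<and> is_ellipse_centred E (RD, thD)
    \<and> measure lebesgue {(R, th). Xc M c fc d RD * (R - RD)^2 + 2 * Yc M c fc d RD thD * (R - RD) * (th - thD)
                                 + Zc M c fc d thD * (th - thD)^2 \<le> (real M)^2}
        = 3 * sqrt 15 * c^2 * RD^2 /
          (pi * fc^2 * d^3 * cos thD * ((real M)^2 - 1) * sqrt ((real M)^2 - 4))
    \<and> (\<exists>Rmax Rmin. Rmax \<in> fst ` E \<and> Rmin \<in> fst ` E
          \<and> (\<forall>r\<in>fst ` E. Rmin \<le> r \<and> r \<le> Rmax)
          \<and> Rmax - Rmin = 6 * sqrt 10 * c * RD^2 /
              (pi * fc * d^2 * sqrt (((real M)^2 - 1) * ((real M)^2 - 4))))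
    \<and> (\<exists>tmax tmin. tmax \<in> snd ` E \<and> tmin \<in> snd ` E
          \<and> (\<forall>t\<in>snd ` E. tmin \<le> t \<and> t \<le> tmax)
          \<and> tmax - tmin = c * sqrt (6 * (16 * (real M)^2 - 30 * real M + 11)) /
              (pi * fc * d * cos thD * sqrt (((real M)^2 - 1) * ((real M)^2 - 4))))"
proof -
  have cos_pos: "cos thD > 0" using hth1 hth2 by (rule cos_gt_zero_pi)
  note params = hM hc hfc hd hRD cos_pos
  have disc: "Xc M c fc d RD * Zc M c fc d thD - (Yc M c fc d RD thD)^2 > 0"
    using beampattern_discriminant_pos params by simp
  have X: "Xc M c fc d RD > 0" using Xc_pos hM hc hfc hd hRD by simp
  have M: "real M > 0" using hM by simp
  have "(Yc M c fc d RD thD)^2 < Xc M c fc d RD * Zc M c fc d thD" using disc by simp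
  then show ?thesis
    unfolding E_def
    using quadratic_level_set_is_ellipse[OF X disc M, where xc = RD and yc = thD]
      measure_quadratic_sublevel_set[OF X disc M, where xc = RD and yc = thD,
        unfolded beampattern_area[OF params]]
      quadratic_level_set_fst_extent[OF X disc M, where xc = RD and yc = thD,
        unfolded beampattern_range_extent[OF params]]
      quadratic_level_set_snd_extent[OF X disc M, where xc = RD and yc = thD,
        unfolded beampattern_angle_extent[OF params]]
    by (intro conjI) assumption+
qed

end
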